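(* Let $C$ be a globularily generated double category and let $\Phi,\Psi$ be horizontally composable 2-morphisms of $C$ (i.e. $t\Phi=s\Psi$). Then the horizontal composite $\Psi\ast\Phi$ is globular if and only if both $\Phi$ and $\Psi$ are globular.
   Context: Double categories are not assumed strict: $C_0$ (objects and vertical morphisms), $C_1$ (horizontal morphisms and 2-morphisms), source and target functors $s,t:C_1\to C_0$, horizontal identity $i$, horizontal composition $\ast$, with unitor and associator components globular. A 2-morphism $\Phi$ is globular if $s\Phi$ and $t\Phi$ are identity vertical morphisms. $C$ is globularily generated if the smallest sub-double category of $C$ containing all objects, vertical morphisms, horizontal morphisms and globular 2-morphisms of $C$ is $C$ itself. *)

theory Defs
  imports Main
begin

text \<open>A (not necessarily strict, i.e. pseudo) double category, given by explicit data.
  C0: objects Ob, vertical morphisms VM (composition vcomp g f = g o f).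
  C1: horizontal morphisms HM as objects, 2-morphisms TM as morphisms
      (vertical composition mcomp Y X = Y o X, identities mid).
  Source/target functors s,t : C1 -> C0 are (hsrc,msrc), (htgt,mtgt).
  Horizontal identity functor i : C0 -> C1 is (hunit, munit).
  Horizontal composition: hhcomp k h = k * h (defined when htgt h = hsrc k),
      mhcomp Y X = Y * X (defined when mtgt X = msrc Y).\<close>

record ('o,'v,'h,'m) dcat =
  Ob :: "'o set"
  VM :: "'v set"
  vdom :: "'v \<Rightarrow> 'o"
  vcod :: "'v \<Rightarrow> 'o"
  vcomp :: "'v \<Rightarrow> 'v \<Rightarrow> 'v"
  vid :: "'o \<Rightarrow> 'v"
  HM :: "'h set"
  TM :: "'m set"
  mdom :: "'m \<Rightarrow> 'h"
  mcod :: "'m \<Rightarrow> 'h"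
  mcomp :: "'m \<Rightarrow> 'm \<Rightarrow> 'm"
  mid :: "'h \<Rightarrow> 'm"
  hsrc :: "'h \<Rightarrow> 'o"
  htgt :: "'h \<Rightarrow> 'o"
  msrc :: "'m \<Rightarrow> 'v"
  mtgt :: "'m \<Rightarrow> 'v"
  hunit :: "'o \<Rightarrow> 'h"
  munit :: "'v \<Rightarrow> 'm"
  hhcomp :: "'h \<Rightarrow> 'h \<Rightarrow> 'h"
  mhcomp :: "'m \<Rightarrow> 'm \<Rightarrow> 'm"
  lunit :: "'h \<Rightarrow> 'm"
  runit :: "'h \<Rightarrow> 'm"
  assoc :: "'h \<Rightarrow> 'h \<Rightarrow> 'h \<Rightarrow> 'm"

definition category ::
  "'a set \<Rightarrow> 'b set \<Rightarrow> ('b \<Rightarrow> 'a) \<Rightarrow> ('b \<Rightarrow> 'a) \<Rightarrow> ('b \<Rightarrow> 'b \<Rightarrow> 'b) \<Rightarrow> ('a \<Rightarrow> 'b) \<Rightarrow> bool" where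
  "category Obs M dm cd cmp ident \<longleftrightarrow>
     (\<forall>f\<in>M. dm f \<in> Obs \<and> cd f \<in> Obs) \<and>
     (\<forall>a\<in>Obs. ident a \<in> M \<and> dm (ident a) = a \<and> cd (ident a) = a) \<and>
     (\<forall>f\<in>M. \<forall>g\<in>M. dm g = cd f \<longrightarrow>
        cmp g f \<in> M \<and> dm (cmp g f) = dm f \<and> cd (cmp g f) = cd g) \<and>
     (\<forall>f\<in>M. cmp (ident (cd f)) f = f \<and> cmp f (ident (dm f)) = f) \<and>
     (\<forall>f\<in>M. \<forall>g\<in>M. \<forall>h\<in>M. dm g = cd f \<longrightarrow> dm h = cd g \<longrightarrow>
        cmp h (cmp g f) = cmp (cmp h g) f)"

definition is_minv :: "('o,'v,'h,'m,'z) dcat_scheme \<Rightarrow> 'm \<Rightarrow> 'm \<Rightarrow> bool" where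
  "is_minv C X Y \<longleftrightarrow> Y \<in> TM C \<and> mdom C Y = mcod C X \<and> mcod C Y = mdom C X \<and>
     mcomp C Y X = mid C (mdom C X) \<and> mcomp C X Y = mid C (mcod C X)"

definition miso :: "('o,'v,'h,'m,'z) dcat_scheme \<Rightarrow> 'm \<Rightarrow> bool" where
  "miso C X \<longleftrightarrow> X \<in> TM C \<and> (\<exists>Y. is_minv C X Y)"

definition is_vid :: "('o,'v,'h,'m,'z) dcat_scheme \<Rightarrow> 'v \<Rightarrow> bool" where
  "is_vid C f \<longleftrightarrow> (\<exists>a\<in>Ob C. f = vid C a)"

definition globular :: "('o,'v,'h,'m,'z) dcat_scheme \<Rightarrow> 'm \<Rightarrow> bool" where
  "globular C X \<longleftrightarrow> is_vid C (msrc C X) \<and> is_vid C (mtgt C X)"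

definition double_category :: "('o,'v,'h,'m,'z) dcat_scheme \<Rightarrow> bool" where
  "double_category C \<longleftrightarrow>
    \<comment> \<open>C0 and C1 are categories\<close>
    category (Ob C) (VM C) (vdom C) (vcod C) (vcomp C) (vid C) \<and>
    category (HM C) (TM C) (mdom C) (mcod C) (mcomp C) (mid C) \<and>
    \<comment> \<open>source functor s : C1 -> C0\<close>
    (\<forall>h\<in>HM C. hsrc C h \<in> Ob C) \<and>
    (\<forall>X\<in>TM C. msrc C X \<in> VM C \<and> vdom C (msrc C X) = hsrc C (mdom C X)
                \<and> vcod C (msrc C X) = hsrc C (mcod C X)) \<and>
    (\<forall>X\<in>TM C. \<forall>Y\<in>TM C. mdom C Y = mcod C X \<longrightarrow>
        msrc C (mcomp C Y X) = vcomp C (msrc C Y) (msrc C X)) \<and>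
    (\<forall>h\<in>HM C. msrc C (mid C h) = vid C (hsrc C h)) \<and>
    \<comment> \<open>target functor t : C1 -> C0\<close>
    (\<forall>h\<in>HM C. htgt C h \<in> Ob C) \<and>
    (\<forall>X\<in>TM C. mtgt C X \<in> VM C \<and> vdom C (mtgt C X) = htgt C (mdom C X)
                \<and> vcod C (mtgt C X) = htgt C (mcod C X)) \<and>
    (\<forall>X\<in>TM C. \<forall>Y\<in>TM C. mdom C Y = mcod C X \<longrightarrow>
        mtgt C (mcomp C Y X) = vcomp C (mtgt C Y) (mtgt C X)) \<and>
    (\<forall>h\<in>HM C. mtgt C (mid C h) = vid C (htgt C h)) \<and>
    \<comment> \<open>horizontal identity functor i : C0 -> C1, with s i = t i = id\<close>
    (\<forall>a\<in>Ob C. hunit C a \<in> HM C \<and> hsrc C (hunit C a) = a \<and> htgt C (hunit C a) = a) \<and>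
    (\<forall>f\<in>VM C. munit C f \<in> TM C \<and> mdom C (munit C f) = hunit C (vdom C f)
                \<and> mcod C (munit C f) = hunit C (vcod C f)
                \<and> msrc C (munit C f) = f \<and> mtgt C (munit C f) = f) \<and>
    (\<forall>f\<in>VM C. \<forall>g\<in>VM C. vdom C g = vcod C f \<longrightarrow>
        munit C (vcomp C g f) = mcomp C (munit C g) (munit C f)) \<and>
    (\<forall>a\<in>Ob C. munit C (vid C a) = mid C (hunit C a)) \<and>
    \<comment> \<open>horizontal composition functor * : C1 x_C0 C1 -> C1\<close>
    (\<forall>h\<in>HM C. \<forall>k\<in>HM C. htgt C h = hsrc C k \<longrightarrow>
        hhcomp C k h \<in> HM C \<and> hsrc C (hhcomp C k h) = hsrc C h
        \<and> htgt C (hhcomp C k h) = htgt C k) \<and>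
    (\<forall>X\<in>TM C. \<forall>Y\<in>TM C. mtgt C X = msrc C Y \<longrightarrow>
        mhcomp C Y X \<in> TM C
        \<and> mdom C (mhcomp C Y X) = hhcomp C (mdom C Y) (mdom C X)
        \<and> mcod C (mhcomp C Y X) = hhcomp C (mcod C Y) (mcod C X)
        \<and> msrc C (mhcomp C Y X) = msrc C X
        \<and> mtgt C (mhcomp C Y X) = mtgt C Y) \<and>
    (\<forall>h\<in>HM C. \<forall>k\<in>HM C. htgt C h = hsrc C k \<longrightarrow>
        mhcomp C (mid C k) (mid C h) = mid C (hhcomp C k h)) \<and>
    (\<forall>X\<in>TM C. \<forall>X'\<in>TM C. \<forall>Y\<in>TM C. \<forall>Y'\<in>TM C.
        mdom C X' = mcod C X \<longrightarrow> mdom C Y' = mcod C Y \<longrightarrow>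
        mtgt C X = msrc C Y \<longrightarrow> mtgt C X' = msrc C Y' \<longrightarrow>
        mhcomp C (mcomp C Y' Y) (mcomp C X' X) = mcomp C (mhcomp C Y' X') (mhcomp C Y X)) \<and>
    \<comment> \<open>left unitor: globular natural isomorphism i(t h) * h => h\<close>
    (\<forall>h\<in>HM C. miso C (lunit C h)
        \<and> mdom C (lunit C h) = hhcomp C (hunit C (htgt C h)) h
        \<and> mcod C (lunit C h) = h
        \<and> msrc C (lunit C h) = vid C (hsrc C h)
        \<and> mtgt C (lunit C h) = vid C (htgt C h)) \<and>
    (\<forall>X\<in>TM C. mcomp C X (lunit C (mdom C X))
        = mcomp C (lunit C (mcod C X)) (mhcomp C (munit C (mtgt C X)) X)) \<and>
    \<comment> \<open>right unitor: globular natural isomorphism h * i(s h) => h\<close>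
    (\<forall>h\<in>HM C. miso C (runit C h)
        \<and> mdom C (runit C h) = hhcomp C h (hunit C (hsrc C h))
        \<and> mcod C (runit C h) = h
        \<and> msrc C (runit C h) = vid C (hsrc C h)
        \<and> mtgt C (runit C h) = vid C (htgt C h)) \<and>
    (\<forall>X\<in>TM C. mcomp C X (runit C (mdom C X))
        = mcomp C (runit C (mcod C X)) (mhcomp C X (munit C (msrc C X)))) \<and>
    \<comment> \<open>associator: globular natural isomorphism (k * h) * g => k * (h * g)\<close>
    (\<forall>g\<in>HM C. \<forall>h\<in>HM C. \<forall>k\<in>HM C. htgt C g = hsrc C h \<longrightarrow> htgt C h = hsrc C k \<longrightarrow>
        miso C (assoc C k h g)
        \<and> mdom C (assoc C k h g) = hhcomp C (hhcomp C k h) g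
        \<and> mcod C (assoc C k h g) = hhcomp C k (hhcomp C h g)
        \<and> msrc C (assoc C k h g) = vid C (hsrc C g)
        \<and> mtgt C (assoc C k h g) = vid C (htgt C k)) \<and>
    (\<forall>X\<in>TM C. \<forall>Y\<in>TM C. \<forall>Z\<in>TM C. mtgt C X = msrc C Y \<longrightarrow> mtgt C Y = msrc C Z \<longrightarrow>
        mcomp C (mhcomp C Z (mhcomp C Y X)) (assoc C (mdom C Z) (mdom C Y) (mdom C X))
        = mcomp C (assoc C (mcod C Z) (mcod C Y) (mcod C X)) (mhcomp C (mhcomp C Z Y) X)) \<and>
    \<comment> \<open>pentagon\<close>
    (\<forall>f\<in>HM C. \<forall>g\<in>HM C. \<forall>h\<in>HM C. \<forall>k\<in>HM C.
        htgt C f = hsrc C g \<longrightarrow> htgt C g = hsrc C h \<longrightarrow> htgt C h = hsrc C k \<longrightarrow>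
        mcomp C (assoc C k h (hhcomp C g f)) (assoc C (hhcomp C k h) g f)
        = mcomp C (mhcomp C (mid C k) (assoc C h g f))
            (mcomp C (assoc C k (hhcomp C h g) f) (mhcomp C (assoc C k h g) (mid C f)))) \<and>
    \<comment> \<open>triangle\<close>
    (\<forall>f\<in>HM C. \<forall>g\<in>HM C. htgt C f = hsrc C g \<longrightarrow>
        mcomp C (mhcomp C (mid C g) (lunit C f)) (assoc C g (hunit C (htgt C f)) f)
        = mhcomp C (runit C g) (mid C f))"

definition sub_double_category ::
  "('o,'v,'h,'m,'z) dcat_scheme \<Rightarrow> 'o set \<Rightarrow> 'v set \<Rightarrow> 'h set \<Rightarrow> 'm set \<Rightarrow> bool" where
  "sub_double_category C Os V H M \<longleftrightarrow>
    Os \<subseteq> Ob C \<and> V \<subseteq> VM C \<and> H \<subseteq> HM C \<and> M \<subseteq> TM C \<and>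
    (\<forall>f\<in>V. vdom C f \<in> Os \<and> vcod C f \<in> Os) \<and>
    (\<forall>a\<in>Os. vid C a \<in> V) \<and>
    (\<forall>f\<in>V. \<forall>g\<in>V. vdom C g = vcod C f \<longrightarrow> vcomp C g f \<in> V) \<and>
    (\<forall>h\<in>H. hsrc C h \<in> Os \<and> htgt C h \<in> Os) \<and>
    (\<forall>X\<in>M. mdom C X \<in> H \<and> mcod C X \<in> H \<and> msrc C X \<in> V \<and> mtgt C X \<in> V) \<and>
    (\<forall>h\<in>H. mid C h \<in> M) \<and>
    (\<forall>X\<in>M. \<forall>Y\<in>M. mdom C Y = mcod C X \<longrightarrow> mcomp C Y X \<in> M) \<and>
    (\<forall>a\<in>Os. hunit C a \<in> H) \<and>
    (\<forall>f\<in>V. munit C f \<in> M) \<and>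
    (\<forall>h\<in>H. \<forall>k\<in>H. htgt C h = hsrc C k \<longrightarrow> hhcomp C k h \<in> H) \<and>
    (\<forall>X\<in>M. \<forall>Y\<in>M. mtgt C X = msrc C Y \<longrightarrow> mhcomp C Y X \<in> M) \<and>
    (\<forall>h\<in>H. lunit C h \<in> M \<and> (\<exists>Y\<in>M. is_minv C (lunit C h) Y)) \<and>
    (\<forall>h\<in>H. runit C h \<in> M \<and> (\<exists>Y\<in>M. is_minv C (runit C h) Y)) \<and>
    (\<forall>g\<in>H. \<forall>h\<in>H. \<forall>k\<in>H. htgt C g = hsrc C h \<longrightarrow> htgt C h = hsrc C k \<longrightarrow>
        assoc C k h g \<in> M \<and> (\<exists>Y\<in>M. is_minv C (assoc C k h g) Y))"

text \<open>Globularily generated: the smallest sub-double category containing all objects,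
  vertical morphisms, horizontal morphisms and globular 2-morphisms is C itself,
  i.e. every such sub-double category contains all 2-morphisms.\<close>
definition globularily_generated :: "('o,'v,'h,'m,'z) dcat_scheme \<Rightarrow> bool" where
  "globularily_generated C \<longleftrightarrow>
    (\<forall>Os V H M. sub_double_category C Os V H M \<and> Ob C \<subseteq> Os \<and> VM C \<subseteq> V \<and> HM C \<subseteq> H
        \<and> {X \<in> TM C. globular C X} \<subseteq> M
        \<longrightarrow> Os = Ob C \<and> V = VM C \<and> H = HM C \<and> M = TM C)"

end

theory Submission
  imports Defs
begin

text \<open>The 2-morphisms that are globular or whose vertical source and target coincide form a
  sub-double category: it contains horizontal identities i(f) (with s = t = f) and all
  globular 2-morphisms, and is closed under vertical composition, under horizontal composition
  (composability t X = s Y makes every mixed composite fall into one of the two classes) and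
  under inverses of the globular unitors and associators. In a globularily generated double
  category it is therefore everything. Now if \<Psi> * \<Phi> is globular, then s \<Phi> and t \<Psi> are
  identities; either \<Phi> is globular or t \<Phi> = s \<Phi>, and in both cases t \<Phi> = s \<Psi> is an identity.\<close>

lemma category_ident:
  assumes "category Obs M dm cd cmp ident" "a \<in> Obs"
  shows "ident a \<in> M" "dm (ident a) = a" "cd (ident a) = a"
  using assms unfolding category_def by blast+

lemma category_comp:
  assumes "category Obs M dm cd cmp ident" "f \<in> M" "g \<in> M" "dm g = cd f"
  shows "cmp g f \<in> M"
  using assms unfolding category_def by blast

lemma category_comp_ident:
  assumes "category Obs M dm cd cmp ident" "f \<in> M"
  shows "cmp (ident (cd f)) f = f" "cmp f (ident (dm f)) = f"
  using assms unfolding category_def by blast+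

lemma category_dom_cod:
  assumes "category Obs M dm cd cmp ident" "f \<in> M"
  shows "dm f \<in> Obs" "cd f \<in> Obs"
  using assms unfolding category_def by blast+

definition globular_or_same_sides :: "('o,'v,'h,'m,'z) dcat_scheme \<Rightarrow> 'm \<Rightarrow> bool" where
  "globular_or_same_sides C X \<longleftrightarrow> globular C X \<or> msrc C X = mtgt C X"

context
  fixes C :: "('o,'v,'h,'m,'z) dcat_scheme"
  assumes dc: "double_category C"
begin

lemma vertical_category: "category (Ob C) (VM C) (vdom C) (vcod C) (vcomp C) (vid C)"
  using dc unfolding double_category_def by (elim conjE) blast

lemma horizontal_category: "category (HM C) (TM C) (mdom C) (mcod C) (mcomp C) (mid C)"
  using dc unfolding double_category_def by (elim conjE) blast

lemma hsrc_htgt_Ob: "h \<in> HM C \<Longrightarrow> hsrc C h \<in> Ob C \<and> htgt C h \<in> Ob C"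
  using dc unfolding double_category_def by (elim conjE) blast

lemma msrc_VM: "X \<in> TM C \<Longrightarrow> msrc C X \<in> VM C \<and> vdom C (msrc C X) = hsrc C (mdom C X)
    \<and> vcod C (msrc C X) = hsrc C (mcod C X)"
  using dc unfolding double_category_def by (elim conjE) blast

lemma mtgt_VM: "X \<in> TM C \<Longrightarrow> mtgt C X \<in> VM C \<and> vdom C (mtgt C X) = htgt C (mdom C X)
    \<and> vcod C (mtgt C X) = htgt C (mcod C X)"
  using dc unfolding double_category_def by (elim conjE) blast

lemma msrc_mcomp: "\<lbrakk>X \<in> TM C; Y \<in> TM C; mdom C Y = mcod C X\<rbrakk> \<Longrightarrow>
    msrc C (mcomp C Y X) = vcomp C (msrc C Y) (msrc C X)"
  using dc unfolding double_category_def by (elim conjE) blast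

lemma mtgt_mcomp: "\<lbrakk>X \<in> TM C; Y \<in> TM C; mdom C Y = mcod C X\<rbrakk> \<Longrightarrow>
    mtgt C (mcomp C Y X) = vcomp C (mtgt C Y) (mtgt C X)"
  using dc unfolding double_category_def by (elim conjE) blast

lemma msrc_mtgt_mid: "h \<in> HM C \<Longrightarrow>
    msrc C (mid C h) = vid C (hsrc C h) \<and> mtgt C (mid C h) = vid C (htgt C h)"
  using dc unfolding double_category_def by (elim conjE) blast

lemma munit_TM: "f \<in> VM C \<Longrightarrow>
    munit C f \<in> TM C \<and> msrc C (munit C f) = f \<and> mtgt C (munit C f) = f"
  using dc unfolding double_category_def by (elim conjE) blast

lemma mhcomp_TM: "\<lbrakk>X \<in> TM C; Y \<in> TM C; mtgt C X = msrc C Y\<rbrakk> \<Longrightarrow>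
    mhcomp C Y X \<in> TM C \<and> msrc C (mhcomp C Y X) = msrc C X \<and> mtgt C (mhcomp C Y X) = mtgt C Y"
  using dc unfolding double_category_def by (elim conjE) blast

lemma hunit_HM: "a \<in> Ob C \<Longrightarrow> hunit C a \<in> HM C"
  using dc unfolding double_category_def by (elim conjE) blast

lemma hhcomp_HM: "\<lbrakk>h \<in> HM C; k \<in> HM C; htgt C h = hsrc C k\<rbrakk> \<Longrightarrow> hhcomp C k h \<in> HM C"
  using dc unfolding double_category_def by (elim conjE) blast

lemma globularI: "\<lbrakk>h \<in> HM C; k \<in> HM C; msrc C X = vid C (hsrc C h); mtgt C X = vid C (htgt C k)\<rbrakk>
    \<Longrightarrow> globular C X"
  using hsrc_htgt_Ob unfolding globular_def is_vid_def by blast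

lemma miso_globular_lunit: "h \<in> HM C \<Longrightarrow> miso C (lunit C h) \<and> globular C (lunit C h)"
proof -
  have "\<forall>h\<in>HM C. miso C (lunit C h)
        \<and> mdom C (lunit C h) = hhcomp C (hunit C (htgt C h)) h
        \<and> mcod C (lunit C h) = h
        \<and> msrc C (lunit C h) = vid C (hsrc C h)
        \<and> mtgt C (lunit C h) = vid C (htgt C h)"
    using dc unfolding double_category_def by (elim conjE) assumption
  then show "h \<in> HM C \<Longrightarrow> ?thesis" using globularI by blast
qed

lemma miso_globular_runit: "h \<in> HM C \<Longrightarrow> miso C (runit C h) \<and> globular C (runit C h)"
proof -
  have "\<forall>h\<in>HM C. miso C (runit C h)
        \<and> mdom C (runit C h) = hhcomp C h (hunit C (hsrc C h))
        \<and> mcod C (runit C h) = h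
        \<and> msrc C (runit C h) = vid C (hsrc C h)
        \<and> mtgt C (runit C h) = vid C (htgt C h)"
    using dc unfolding double_category_def by (elim conjE) assumption
  then show "h \<in> HM C \<Longrightarrow> ?thesis" using globularI by blast
qed

lemma miso_globular_assoc:
  assumes "g \<in> HM C" "h \<in> HM C" "k \<in> HM C" "htgt C g = hsrc C h" "htgt C h = hsrc C k"
  shows "miso C (assoc C k h g) \<and> globular C (assoc C k h g)"
proof -
  have "\<forall>g\<in>HM C. \<forall>h\<in>HM C. \<forall>k\<in>HM C. htgt C g = hsrc C h \<longrightarrow> htgt C h = hsrc C k \<longrightarrow>
        miso C (assoc C k h g)
        \<and> mdom C (assoc C k h g) = hhcomp C (hhcomp C k h) g
        \<and> mcod C (assoc C k h g) = hhcomp C k (hhcomp C h g)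
        \<and> msrc C (assoc C k h g) = vid C (hsrc C g)
        \<and> mtgt C (assoc C k h g) = vid C (htgt C k)"
    using dc unfolding double_category_def by (elim conjE) assumption
  with assms show ?thesis using globularI by blast
qed

lemma vcomp_vid_left:
  assumes "is_vid C g" "f \<in> VM C" "vdom C g = vcod C f"
  shows "vcomp C g f = f"
  using assms category_ident[OF vertical_category] category_comp_ident[OF vertical_category]
  unfolding is_vid_def by metis

lemma vcomp_vid_right:
  assumes "is_vid C g" "f \<in> VM C" "vdom C f = vcod C g"
  shows "vcomp C f g = f"
  using assms category_ident[OF vertical_category] category_comp_ident[OF vertical_category]
  unfolding is_vid_def by metis

lemma globular_minv:
  assumes X: "X \<in> TM C" "globular C X" and inv: "is_minv C X Y"
  shows "globular C Y"
proof -
  have Y: "Y \<in> TM C" "mdom C Y = mcod C X" "mcomp C Y X = mid C (mdom C X)"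
    using inv unfolding is_minv_def by auto
  have dom: "mdom C X \<in> HM C"
    using category_dom_cod[OF horizontal_category X(1)] by simp
  have "msrc C Y = vcomp C (msrc C Y) (msrc C X)"
    using X Y vcomp_vid_right msrc_VM unfolding globular_def by metis
  also have "\<dots> = vid C (hsrc C (mdom C X))"
    using msrc_mcomp[OF X(1) Y(1,2)] Y(3) msrc_mtgt_mid[OF dom] by simp
  finally have src: "msrc C Y = vid C (hsrc C (mdom C X))" .
  have "mtgt C Y = vcomp C (mtgt C Y) (mtgt C X)"
    using X Y vcomp_vid_right mtgt_VM unfolding globular_def by metis
  also have "\<dots> = vid C (htgt C (mdom C X))"
    using mtgt_mcomp[OF X(1) Y(1,2)] Y(3) msrc_mtgt_mid[OF dom] by simp
  finally show ?thesis
    using src globularI[OF dom dom] by blast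
qed

lemma globular_or_same_sides_mcomp:
  assumes X: "X \<in> TM C" "globular_or_same_sides C X"
    and Y: "Y \<in> TM C" "globular_or_same_sides C Y"
    and comp: "mdom C Y = mcod C X"
  shows "globular_or_same_sides C (mcomp C Y X)"
proof -
  have src: "msrc C (mcomp C Y X) = vcomp C (msrc C Y) (msrc C X)"
    and tgt: "mtgt C (mcomp C Y X) = vcomp C (mtgt C Y) (mtgt C X)"
    using msrc_mcomp mtgt_mcomp X Y comp by auto
  have sides: "msrc C X \<in> VM C" "mtgt C X \<in> VM C" "msrc C Y \<in> VM C" "mtgt C Y \<in> VM C"
    "vdom C (msrc C Y) = vcod C (msrc C X)" "vdom C (mtgt C Y) = vcod C (mtgt C X)"
    using msrc_VM mtgt_VM X Y comp by auto
  consider "globular C X" "globular C Y" | "globular C X" "msrc C Y = mtgt C Y"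
    | "msrc C X = mtgt C X" "globular C Y" | "msrc C X = mtgt C X" "msrc C Y = mtgt C Y"
    using X(2) Y(2) unfolding globular_or_same_sides_def by blast
  then show ?thesis
  proof cases
    case 1
    then show ?thesis
      using src tgt sides vcomp_vid_left unfolding globular_or_same_sides_def globular_def
      by metis
  next
    case 2
    then show ?thesis
      using src tgt sides vcomp_vid_right unfolding globular_or_same_sides_def globular_def
      by metis
  next
    case 3
    then show ?thesis
      using src tgt sides vcomp_vid_left unfolding globular_or_same_sides_def globular_def
      by metis
  next
    case 4
    then show ?thesis
      using src tgt unfolding globular_or_same_sides_def by simp
  qed
qed

lemma globular_or_same_sides_mhcomp:
  assumes X: "X \<in> TM C" "globular_or_same_sides C X"
    and Y: "Y \<in> TM C" "globular_or_same_sides C Y"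
    and comp: "mtgt C X = msrc C Y"
  shows "globular_or_same_sides C (mhcomp C Y X)"
  using X Y comp mhcomp_TM[OF X(1) Y(1) comp]
  unfolding globular_or_same_sides_def globular_def by auto

lemma sub_double_category_globular_or_same_sides:
  "sub_double_category C (Ob C) (VM C) (HM C) {X \<in> TM C. globular_or_same_sides C X}"
    (is "sub_double_category C _ _ _ ?M")
proof -
  have iso_closed: "X \<in> ?M \<and> (\<exists>Y\<in>?M. is_minv C X Y)" if "miso C X" "globular C X" for X
  proof -
    obtain Y where "X \<in> TM C" "is_minv C X Y"
      using \<open>miso C X\<close> unfolding miso_def by blast
    then show ?thesis
      using globular_minv \<open>globular C X\<close> unfolding is_minv_def globular_or_same_sides_def
      by blast
  qed
  have mid: "mid C h \<in> ?M" if "h \<in> HM C" for h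
    using that category_ident[OF horizontal_category] msrc_mtgt_mid
      globularI unfolding globular_or_same_sides_def by blast
  show ?thesis
    unfolding sub_double_category_def
  proof (intro conjI)
    show "\<forall>X\<in>?M. mdom C X \<in> HM C \<and> mcod C X \<in> HM C \<and> msrc C X \<in> VM C \<and> mtgt C X \<in> VM C"
      using category_dom_cod[OF horizontal_category] msrc_VM mtgt_VM by blast
    show "\<forall>X\<in>?M. \<forall>Y\<in>?M. mdom C Y = mcod C X \<longrightarrow> mcomp C Y X \<in> ?M"
      using category_comp[OF horizontal_category] globular_or_same_sides_mcomp by blast
    show "\<forall>f\<in>VM C. munit C f \<in> ?M"
      using munit_TM unfolding globular_or_same_sides_def by simp
    show "\<forall>X\<in>?M. \<forall>Y\<in>?M. mtgt C X = msrc C Y \<longrightarrow> mhcomp C Y X \<in> ?M"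
      using mhcomp_TM globular_or_same_sides_mhcomp by blast
    show "\<forall>h\<in>HM C. lunit C h \<in> ?M \<and> (\<exists>Y\<in>?M. is_minv C (lunit C h) Y)"
      using miso_globular_lunit iso_closed by blast
    show "\<forall>h\<in>HM C. runit C h \<in> ?M \<and> (\<exists>Y\<in>?M. is_minv C (runit C h) Y)"
      using miso_globular_runit iso_closed by blast
    show "\<forall>g\<in>HM C. \<forall>h\<in>HM C. \<forall>k\<in>HM C. htgt C g = hsrc C h \<longrightarrow> htgt C h = hsrc C k \<longrightarrow>
        assoc C k h g \<in> ?M \<and> (\<exists>Y\<in>?M. is_minv C (assoc C k h g) Y)"
      using miso_globular_assoc iso_closed by blast
  qed (use vertical_category hsrc_htgt_Ob mid hunit_HM hhcomp_HM in
      \<open>auto simp: category_def\<close>)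
qed

end

lemma globularily_generated_globular_or_same_sides:
  assumes "double_category C" "globularily_generated C" "X \<in> TM C"
  shows "globular_or_same_sides C X"
proof -
  have "{X \<in> TM C. globular C X} \<subseteq> {X \<in> TM C. globular_or_same_sides C X}"
    unfolding globular_or_same_sides_def by blast
  then have "{X \<in> TM C. globular_or_same_sides C X} = TM C"
    using assms(2) sub_double_category_globular_or_same_sides[OF assms(1)]
    unfolding globularily_generated_def by blast
  with assms(3) show ?thesis by blast
qed

theorem corollary4p5:
  fixes C :: "('o,'v,'h,'m) dcat"
  assumes "double_category C"
    and "globularily_generated C"
    and "\<Phi> \<in> TM C" and "\<Psi> \<in> TM C"
    and "mtgt C \<Phi> = msrc C \<Psi>"
  shows "globular C (mhcomp C \<Psi> \<Phi>) \<longleftrightarrow> globular C \<Phi> \<and> globular C \<Psi>"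
proof -
  have "msrc C (mhcomp C \<Psi> \<Phi>) = msrc C \<Phi>" "mtgt C (mhcomp C \<Psi> \<Phi>) = mtgt C \<Psi>"
    using mhcomp_TM[OF assms(1,3-5)] by simp_all
  moreover have "globular_or_same_sides C \<Phi>"
    using globularily_generated_globular_or_same_sides assms(1-3) .
  ultimately show ?thesis
    using assms(5) unfolding globular_or_same_sides_def globular_def by auto
qed

end
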